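(* Let $f\in\mathcal{L}^1(\mathbb{R})+BV_0(\mathbb{R})$ be such that $g(t):=t f(t)$ also belongs to $\mathcal{L}^1(\mathbb{R})+BV_0(\mathbb{R})$. Then $\mathcal{F}_{HK}(f)$ is continuously differentiable on $\mathbb{R}\setminus\{0\}$ and $$\frac{d}{ds}\mathcal{F}_{HK}(f)(s)=-i\,\mathcal{F}_{HK}(g)(s)\qquad (s\neq 0).$$
   Context: $BV_0(\mathbb{R})$: real functions of bounded variation on $\mathbb{R}$ vanishing at $\pm\infty$. $\mathcal{L}^1(\mathbb{R})+BV_0(\mathbb{R})$: functions $f=f_1+f_2$ with $f_1\in\mathcal{L}^1(\mathbb{R})$, $f_2\in BV_0(\mathbb{R})$. For such $f$ and $s\neq 0$, $\mathcal{F}_{HK}(f)(s)=\frac{1}{\sqrt{2\pi}}\int_{\mathbb{R}}e^{-isx}f(x)\,dx$, where the integral is the Henstock–Kurzweil integral over $\mathbb{R}$ (extending the Lebesgue and improper Riemann integrals; it exists for such $f$ and $s\neq0$). *)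

theory Defs
  imports "HOL-Analysis.Analysis"
begin

definition bounded_variation_real :: "(real \<Rightarrow> real) \<Rightarrow> bool" where
  "bounded_variation_real f \<longleftrightarrow>
     (\<exists>M. \<forall>xs :: real list. sorted xs \<longrightarrow>
        (\<Sum>i<length xs - 1. \<bar>f (xs ! Suc i) - f (xs ! i)\<bar>) \<le> M)"

definition BV0 :: "(real \<Rightarrow> real) set" where
  "BV0 = {f. bounded_variation_real f \<and> (f \<longlongrightarrow> 0) at_top \<and> (f \<longlongrightarrow> 0) at_bot}"

definition L1_plus_BV0 :: "(real \<Rightarrow> real) set" where
  "L1_plus_BV0 = {f. \<exists>f1 f2. f1 absolutely_integrable_on (UNIV :: real set)
                          \<and> f2 \<in> BV0 \<and> f = (\<lambda>x. f1 x + f2 x)}"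

definition FHK :: "(real \<Rightarrow> real) \<Rightarrow> real \<Rightarrow> complex" where
  "FHK f s = (1 / complex_of_real (sqrt (2 * pi))) *
     integral (UNIV :: real set) (\<lambda>x. exp (- \<i> * complex_of_real (s * x)) * complex_of_real (f x))"

end

theory Submission
  imports Defs "HOL-Probability.Characteristic_Functions"
begin

text \<open>Write \<open>f = f\<^sub>1 + A - C\<close> with \<open>f\<^sub>1\<close> integrable and \<open>A\<close>, \<open>C\<close> bounded monotone functions
  having common limits at \<open>\<plusminus>\<infinity>\<close>. By the second mean value theorem, on an interval \<open>[p, q]\<close>
  far out the integral of \<open>exp (-isx) (A x - C x)\<close> is at most the distance of \<open>A\<close> and \<open>C\<close> from
  their limit times \<open>sup |\<integral> exp (-isx)| \<le> 2 / |s|\<close>. So the tails of the Fourier integral are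
  small uniformly for \<open>|s| \<ge> \<delta> > 0\<close>: the integrals over \<open>[-n, n]\<close> converge to the transform
  uniformly on \<open>|s| \<ge> \<delta>\<close>, and they are differentiable with derivative \<open>-i\<close> times the truncated
  transform of \<open>t f(t)\<close> by a second order Taylor bound for the kernel. Since \<open>t f(t)\<close> has the
  same form, these derivatives converge uniformly as well, which gives the formula and the
  continuity of the derivative.\<close>

section \<open>Functions of bounded variation\<close>

definition variation_sum :: "(real \<Rightarrow> real) \<Rightarrow> real list \<Rightarrow> real" where
  "variation_sum h xs = (\<Sum>i<length xs - 1. \<bar>h (xs ! Suc i) - h (xs ! i)\<bar>)"

lemma variation_sum_nonneg: "0 \<le> variation_sum h xs"
  unfolding variation_sum_def by (auto intro: sum_nonneg)

lemma variation_sum_append_pair: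
  "variation_sum h xs + \<bar>h b - h a\<bar> \<le> variation_sum h (xs @ [a, b])"
proof -
  let ?n = "length xs"
  let ?t = "\<lambda>i. \<bar>h ((xs @ [a, b]) ! Suc i) - h ((xs @ [a, b]) ! i)\<bar>"
  have "variation_sum h xs + \<bar>h b - h a\<bar> = sum ?t {..<?n - 1} + ?t ?n"
    unfolding variation_sum_def by (auto simp: nth_append intro!: sum.cong)
  also have "\<dots> = sum ?t ({..<?n - 1} \<union> {?n})"
    by (subst sum.union_disjoint) auto
  also have "\<dots> \<le> sum ?t {..<?n + 1}"
    by (rule sum_mono2) auto
  also have "\<dots> = variation_sum h (xs @ [a, b])"
    unfolding variation_sum_def by simp
  finally show ?thesis .
qed

definition variation_up_to :: "(real \<Rightarrow> real) \<Rightarrow> real \<Rightarrow> real" where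
  "variation_up_to h x = Sup (variation_sum h ` {xs. sorted xs \<and> (\<forall>y\<in>set xs. y \<le> x)})"

context
  fixes h :: "real \<Rightarrow> real" and M :: real
  assumes variation_le: "\<And>xs. sorted xs \<Longrightarrow> variation_sum h xs \<le> M"
begin

private abbreviation "sums_up_to x \<equiv> variation_sum h ` {xs. sorted xs \<and> (\<forall>y\<in>set xs. y \<le> x)}"

private lemma sums_up_to_nonempty: "sums_up_to x \<noteq> {}"
  by (auto intro!: exI[of _ "[]"])

private lemma sums_up_to_bdd_above: "bdd_above (sums_up_to x)"
  using variation_le by (auto simp: bdd_above_def)

lemma variation_up_to_nonneg: "0 \<le> variation_up_to h x"
  unfolding variation_up_to_def
  by (rule order_trans[OF variation_sum_nonneg[of h "[]"]], rule cSup_upper[OF _ sums_up_to_bdd_above]) auto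

lemma variation_up_to_le: "variation_up_to h x \<le> M"
  unfolding variation_up_to_def
  by (rule cSup_least[OF sums_up_to_nonempty]) (auto intro: variation_le)

lemma variation_up_to_increment:
  assumes "x \<le> y"
  shows "variation_up_to h x + \<bar>h y - h x\<bar> \<le> variation_up_to h y"
proof -
  have "v + \<bar>h y - h x\<bar> \<le> variation_up_to h y" if v: "v \<in> sums_up_to x" for v
  proof -
    obtain xs where xs: "sorted xs" "\<forall>z\<in>set xs. z \<le> x" "v = variation_sum h xs"
      using v by blast
    have "\<forall>z\<in>set (xs @ [x, y]). z \<le> y"
      using xs(2) assms by fastforce
    then have "variation_sum h (xs @ [x, y]) \<in> sums_up_to y"
      using xs assms by (auto simp: sorted_append)
    then have "variation_sum h (xs @ [x, y]) \<le> variation_up_to h y"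
      unfolding variation_up_to_def by (rule cSup_upper[OF _ sums_up_to_bdd_above])
    with variation_sum_append_pair[of h xs y x] xs show ?thesis by simp
  qed
  then have "variation_up_to h x \<le> variation_up_to h y - \<bar>h y - h x\<bar>"
    unfolding variation_up_to_def[of h x]
    by (intro cSup_least[OF sums_up_to_nonempty]) (auto simp: algebra_simps)
  then show ?thesis by simp
qed

end

lemma bounded_variation_real_imp_diff_mono:
  assumes "bounded_variation_real h"
  obtains A C where "mono A" "mono C" "bounded (range A)" "bounded (range C)"
    "\<And>x. h x = A x - C x"
proof
  obtain M where M: "\<And>xs. sorted xs \<Longrightarrow> variation_sum h xs \<le> M"
    using assms unfolding bounded_variation_real_def variation_sum_def by blast
  let ?V = "variation_up_to h"
  have V0: "0 \<le> ?V x" for x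
    using M by (rule variation_up_to_nonneg)
  have VM: "?V x \<le> M" for x
    using M by (rule variation_up_to_le)
  have incr: "?V x + \<bar>h y - h x\<bar> \<le> ?V y" if "x \<le> y" for x y
    using M that by (rule variation_up_to_increment)
  have h_bound: "\<bar>h x\<bar> \<le> \<bar>h 0\<bar> + M" for x
    using incr[of 0 x] incr[of x 0] V0[of 0] V0[of x] VM[of 0] VM[of x] by linarith
  show "mono ?V"
    using incr by (fastforce simp: mono_def intro: order_trans[OF _ incr])
  show "mono (\<lambda>x. ?V x - h x)"
    using incr by (fastforce simp: mono_def abs_le_iff)
  show "bounded (range ?V)"
    using V0 VM by (intro boundedI[of _ M]) (smt (verit) rangeE real_norm_def)
  show "bounded (range (\<lambda>x. ?V x - h x))"
    using V0 VM h_bound by (intro boundedI[of _ "\<bar>h 0\<bar> + 2 * M"]) (smt (verit) rangeE real_norm_def)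
  show "h x = ?V x - (?V x - h x)" for x by simp
qed

lemma mono_tendsto_Sup_at_top:
  fixes A :: "real \<Rightarrow> real"
  assumes "mono A" "bdd_above (range A)"
  shows "(A \<longlongrightarrow> Sup (range A)) at_top"
proof (rule increasing_tendsto)
  show "\<forall>\<^sub>F x in at_top. A x \<le> Sup (range A)"
    by (intro always_eventually allI cSup_upper[OF _ assms(2)]) auto
  fix y assume "y < Sup (range A)"
  then obtain x0 where "y < A x0"
    by (auto simp: less_cSup_iff[OF _ assms(2)])
  then show "\<forall>\<^sub>F x in at_top. y < A x"
    unfolding eventually_at_top_linorder using \<open>mono A\<close>
    by (auto simp: mono_def intro!: exI[of _ x0] intro: less_le_trans)
qed

lemma mono_tendsto_Inf_at_bot:
  fixes A :: "real \<Rightarrow> real"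
  assumes "mono A" "bdd_below (range A)"
  shows "(A \<longlongrightarrow> Inf (range A)) at_bot"
proof (rule decreasing_tendsto)
  show "\<forall>\<^sub>F x in at_bot. Inf (range A) \<le> A x"
    by (intro always_eventually allI cInf_lower[OF _ assms(2)]) auto
  fix y assume "Inf (range A) < y"
  then obtain x0 where "A x0 < y"
    by (auto simp: cInf_less_iff[OF _ assms(2)])
  then show "\<forall>\<^sub>F x in at_bot. A x < y"
    unfolding eventually_at_bot_linorder using \<open>mono A\<close>
    by (auto simp: mono_def intro!: exI[of _ x0] intro: le_less_trans)
qed

lemma BV0_imp_diff_mono_common_limits:
  assumes "h \<in> BV0"
  obtains A C L L' where "mono A" "mono C" "\<And>x. h x = A x - C x"
    "(A \<longlongrightarrow> L) at_top" "(C \<longlongrightarrow> L) at_top" "(A \<longlongrightarrow> L') at_bot" "(C \<longlongrightarrow> L') at_bot"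
proof -
  obtain A C where A: "mono A" "bounded (range A)" and C: "mono C" "bounded (range C)"
    and h: "\<And>x. h x = A x - C x"
    using assms unfolding BV0_def by (auto elim: bounded_variation_real_imp_diff_mono)
  have hAC: "h = (\<lambda>x. A x - C x)"
    using h by auto
  obtain L L' where L: "(A \<longlongrightarrow> L) at_top" and L': "(A \<longlongrightarrow> L') at_bot"
    using mono_tendsto_Sup_at_top[OF A(1)] mono_tendsto_Inf_at_bot[OF A(1)] A(2)
    by (meson bounded_imp_bdd_above bounded_imp_bdd_below)
  obtain K K' where K: "(C \<longlongrightarrow> K) at_top" and K': "(C \<longlongrightarrow> K') at_bot"
    using mono_tendsto_Sup_at_top[OF C(1)] mono_tendsto_Inf_at_bot[OF C(1)] C(2)
    by (meson bounded_imp_bdd_above bounded_imp_bdd_below)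
  have "L - K = 0"
    by (rule tendsto_unique[OF _ tendsto_diff[OF L K]]) (use assms in \<open>auto simp: BV0_def hAC\<close>)
  moreover have "L' - K' = 0"
    by (rule tendsto_unique[OF _ tendsto_diff[OF L' K']]) (use assms in \<open>auto simp: BV0_def hAC\<close>)
  ultimately show thesis
    using that[OF A(1) C(1) h L _ L'] K K' by simp
qed

lemma absolutely_integrable_on_interval_if_mono:
  fixes A :: "real \<Rightarrow> real"
  assumes "mono A"
  shows "A absolutely_integrable_on {p..q}"
proof (rule absolutely_integrable_integrable_bound)
  show "A integrable_on {p..q}"
    using assms by (intro integrable_on_mono_on) (simp add: mono_imp_mono_on)
  show "(\<lambda>_. \<bar>A p\<bar> + \<bar>A q\<bar>) integrable_on {p..q}"
    by (rule integrable_const_ivl)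
  show "norm (A x) \<le> \<bar>A p\<bar> + \<bar>A q\<bar>" if "x \<in> {p..q}" for x
    using that assms monoD[OF assms, of p x] monoD[OF assms, of x q] by auto
qed

lemma L1_plus_BV0_absolutely_integrable_on_interval:
  assumes "\<phi> \<in> L1_plus_BV0"
  shows "\<phi> absolutely_integrable_on {p..q}"
proof -
  obtain f1 f2 where f1: "f1 absolutely_integrable_on UNIV" and f2: "f2 \<in> BV0"
    and \<phi>: "\<phi> = (\<lambda>x. f1 x + f2 x)"
    using assms unfolding L1_plus_BV0_def by blast
  obtain A C where A: "mono A" and C: "mono C" and f2_eq: "\<And>x. f2 x = A x - C x"
    using BV0_imp_diff_mono_common_limits[OF f2] by metis
  have "(\<lambda>x. A x - C x) absolutely_integrable_on {p..q}"
    using A C by (intro set_integral_diff(1) absolutely_integrable_on_interval_if_mono)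
  then have "f2 absolutely_integrable_on {p..q}"
    by (simp add: f2_eq[abs_def])
  moreover have "f1 absolutely_integrable_on {p..q}"
    using f1 by (rule set_integrable_subset) auto
  ultimately show ?thesis
    unfolding \<phi> by (rule set_integral_add(1)[rotated])
qed

section \<open>Oscillatory integrals\<close>

lemma abs_integral_mono_mult_le:
  fixes g \<psi> :: "real \<Rightarrow> real"
  assumes "mono g" and \<psi>: "continuous_on {p..q} \<psi>" and "p \<le> q"
    and K: "\<And>a b. p \<le> a \<Longrightarrow> a \<le> b \<Longrightarrow> b \<le> q \<Longrightarrow> \<bar>integral {a..b} \<psi>\<bar> \<le> K"
  shows "(\<lambda>x. g x * \<psi> x) integrable_on {p..q}"
    and "\<bar>integral {p..q} (\<lambda>x. g x * \<psi> x)\<bar> \<le> (\<bar>g p\<bar> + \<bar>g q\<bar>) * K"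
proof -
  obtain c where c: "c \<in> {p..q}" and int:
    "((\<lambda>x. g x * \<psi> x) has_integral (g p * integral {p..c} \<psi> + g q * integral {c..q} \<psi>)) {p..q}"
    using second_mean_value_theorem_full[OF integrable_continuous_interval[OF \<psi>] \<open>p \<le> q\<close>]
      \<open>mono g\<close> by (metis monoD)
  then show "(\<lambda>x. g x * \<psi> x) integrable_on {p..q}"
    by blast
  have "\<bar>g p * integral {p..c} \<psi>\<bar> \<le> \<bar>g p\<bar> * K" "\<bar>g q * integral {c..q} \<psi>\<bar> \<le> \<bar>g q\<bar> * K"
    unfolding abs_mult using K c by (auto intro!: mult_left_mono)
  then show "\<bar>integral {p..q} (\<lambda>x. g x * \<psi> x)\<bar> \<le> (\<bar>g p\<bar> + \<bar>g q\<bar>) * K"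
    using integral_unique[OF int] by (simp add: algebra_simps)
qed

lemma abs_integral_diff_mono_mult_le:
  fixes A C \<psi> :: "real \<Rightarrow> real"
  assumes "mono A" "mono C" and \<psi>: "continuous_on {p..q} \<psi>" and "p \<le> q"
    and K: "\<And>a b. p \<le> a \<Longrightarrow> a \<le> b \<Longrightarrow> b \<le> q \<Longrightarrow> \<bar>integral {a..b} \<psi>\<bar> \<le> K"
    and near: "\<And>x. x \<in> {p, q} \<Longrightarrow> \<bar>A x - L\<bar> \<le> e \<and> \<bar>C x - L\<bar> \<le> e"
  shows "(\<lambda>x. (A x - C x) * \<psi> x) integrable_on {p..q}"
    and "\<bar>integral {p..q} (\<lambda>x. (A x - C x) * \<psi> x)\<bar> \<le> 4 * e * K"
proof -
  have mA: "mono (\<lambda>x. A x - L)" and mC: "mono (\<lambda>x. C x - L)"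
    using assms(1,2) by (auto simp: mono_def)
  have A: "(\<lambda>x. (A x - L) * \<psi> x) integrable_on {p..q}"
      "\<bar>integral {p..q} (\<lambda>x. (A x - L) * \<psi> x)\<bar> \<le> (\<bar>A p - L\<bar> + \<bar>A q - L\<bar>) * K"
    by (rule abs_integral_mono_mult_le[OF mA \<psi> \<open>p \<le> q\<close>]; fact K)+
  have C: "(\<lambda>x. (C x - L) * \<psi> x) integrable_on {p..q}"
      "\<bar>integral {p..q} (\<lambda>x. (C x - L) * \<psi> x)\<bar> \<le> (\<bar>C p - L\<bar> + \<bar>C q - L\<bar>) * K"
    by (rule abs_integral_mono_mult_le[OF mC \<psi> \<open>p \<le> q\<close>]; fact K)+
  have eq: "(\<lambda>x. (A x - C x) * \<psi> x) = (\<lambda>x. (A x - L) * \<psi> x - (C x - L) * \<psi> x)"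
    by (auto simp: algebra_simps)
  show "(\<lambda>x. (A x - C x) * \<psi> x) integrable_on {p..q}"
    unfolding eq using A(1) C(1) by (rule integrable_diff)
  have "0 \<le> K"
    using K[of p p] \<open>p \<le> q\<close> by auto
  then have bA: "(\<bar>A p - L\<bar> + \<bar>A q - L\<bar>) * K \<le> 2 * e * K"
    and bC: "(\<bar>C p - L\<bar> + \<bar>C q - L\<bar>) * K \<le> 2 * e * K"
    using near[of p] near[of q] by (auto intro!: mult_right_mono)
  have "integral {p..q} (\<lambda>x. (A x - C x) * \<psi> x) =
      integral {p..q} (\<lambda>x. (A x - L) * \<psi> x) - integral {p..q} (\<lambda>x. (C x - L) * \<psi> x)"
    unfolding eq by (rule integral_diff[OF A(1) C(1)])
  also have "\<bar>\<dots>\<bar> \<le> \<bar>integral {p..q} (\<lambda>x. (A x - L) * \<psi> x)\<bar> + \<bar>integral {p..q} (\<lambda>x. (C x - L) * \<psi> x)\<bar>"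
    by (rule abs_triangle_ineq4)
  also have "\<dots> \<le> 2 * e * K + 2 * e * K"
    using order_trans[OF A(2) bA] order_trans[OF C(2) bC] by (rule add_mono)
  finally show "\<bar>integral {p..q} (\<lambda>x. (A x - C x) * \<psi> x)\<bar> \<le> 4 * e * K"
    by (simp add: algebra_simps)
qed

lemma abs_integral_cos_le:
  fixes u :: real
  assumes "u \<noteq> 0" "a \<le> b"
  shows "\<bar>integral {a..b} (\<lambda>x. cos (u * x))\<bar> \<le> 2 / \<bar>u\<bar>"
proof -
  have "((\<lambda>x. cos (u * x)) has_integral (sin (u * b) / u - sin (u * a) / u)) {a..b}"
    using assms by (intro fundamental_theorem_of_calculus)
      (auto intro!: derivative_eq_intros simp: has_real_derivative_iff_has_vector_derivative[symmetric])
  then have "integral {a..b} (\<lambda>x. cos (u * x)) = (sin (u * b) - sin (u * a)) / u"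
    by (simp add: integral_unique diff_divide_distrib)
  moreover have "\<bar>sin (u * b) - sin (u * a)\<bar> \<le> 2"
    using abs_sin_le_one[of "u * b"] abs_sin_le_one[of "u * a"] by linarith
  ultimately show ?thesis
    by (simp add: abs_divide divide_right_mono)
qed

lemma abs_integral_sin_le:
  fixes u :: real
  assumes "u \<noteq> 0" "a \<le> b"
  shows "\<bar>integral {a..b} (\<lambda>x. sin (u * x))\<bar> \<le> 2 / \<bar>u\<bar>"
proof -
  have "((\<lambda>x. sin (u * x)) has_integral (- cos (u * b) / u - - cos (u * a) / u)) {a..b}"
    using assms by (intro fundamental_theorem_of_calculus)
      (auto intro!: derivative_eq_intros simp: has_real_derivative_iff_has_vector_derivative[symmetric])
  then have "integral {a..b} (\<lambda>x. sin (u * x)) = (cos (u * a) - cos (u * b)) / u"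
    by (simp add: integral_unique diff_divide_distrib)
  moreover have "\<bar>cos (u * a) - cos (u * b)\<bar> \<le> 2"
    using abs_cos_le_one[of "u * b"] abs_cos_le_one[of "u * a"] by linarith
  ultimately show ?thesis
    by (simp add: abs_divide divide_right_mono)
qed

abbreviation fourier_kernel :: "real \<Rightarrow> real \<Rightarrow> complex" where
  "fourier_kernel s x \<equiv> exp (- \<i> * complex_of_real (s * x))"

lemma fourier_kernel_eq: "fourier_kernel s x = complex_of_real (cos (s * x)) - \<i> * complex_of_real (sin (s * x))"
  by (simp add: complex_eq_iff Re_exp Im_exp)

lemma norm_fourier_kernel [simp]: "norm (fourier_kernel s x) = 1"
  by (simp add: norm_exp_eq_Re)

lemma norm_integral_fourier_kernel_diff_mono_le:
  fixes A C :: "real \<Rightarrow> real"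
  assumes "mono A" "mono C" "p \<le> q" "u \<noteq> 0"
    and near: "\<And>x. x \<in> {p, q} \<Longrightarrow> \<bar>A x - L\<bar> \<le> e \<and> \<bar>C x - L\<bar> \<le> e"
  shows "norm (integral {p..q} (\<lambda>x. fourier_kernel u x * complex_of_real (A x - C x))) \<le> 16 * e / \<bar>u\<bar>"
proof -
  note bound = abs_integral_diff_mono_mult_le[OF assms(1,2) _ assms(3) _ near]
  have cos: "(\<lambda>x. (A x - C x) * cos (u * x)) integrable_on {p..q}"
    "\<bar>integral {p..q} (\<lambda>x. (A x - C x) * cos (u * x))\<bar> \<le> 4 * e * (2 / \<bar>u\<bar>)"
    using assms by (rule_tac bound; auto intro!: continuous_intros abs_integral_cos_le)+
  have sin: "(\<lambda>x. (A x - C x) * sin (u * x)) integrable_on {p..q}"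
    "\<bar>integral {p..q} (\<lambda>x. (A x - C x) * sin (u * x))\<bar> \<le> 4 * e * (2 / \<bar>u\<bar>)"
    using assms by (rule_tac bound; auto intro!: continuous_intros abs_integral_sin_le)+
  define Ic where "Ic = integral {p..q} (\<lambda>x. (A x - C x) * cos (u * x))"
  define Is where "Is = integral {p..q} (\<lambda>x. (A x - C x) * sin (u * x))"
  have kernel_eq: "(\<lambda>x. fourier_kernel u x * complex_of_real (A x - C x)) =
      (\<lambda>x. complex_of_real ((A x - C x) * cos (u * x)) - \<i> * complex_of_real ((A x - C x) * sin (u * x)))"
    by (simp only: fourier_kernel_eq) (simp add: algebra_simps)
  have "((\<lambda>x. fourier_kernel u x * complex_of_real (A x - C x))
          has_integral (complex_of_real Ic - \<i> * complex_of_real Is)) {p..q}"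
    unfolding kernel_eq Ic_def Is_def using cos(1) sin(1)
    by (intro has_integral_diff has_integral_mult_right has_integral_of_real integrable_integral)
  then have "integral {p..q} (\<lambda>x. fourier_kernel u x * complex_of_real (A x - C x)) =
      complex_of_real Ic - \<i> * complex_of_real Is"
    by (rule integral_unique)
  also have "norm \<dots> \<le> \<bar>Ic\<bar> + \<bar>Is\<bar>"
    by (rule order_trans[OF norm_triangle_ineq4]) (simp add: norm_mult)
  also have "\<dots> \<le> 4 * e * (2 / \<bar>u\<bar>) + 4 * e * (2 / \<bar>u\<bar>)"
    using cos(2) sin(2) unfolding Ic_def Is_def by (rule add_mono)
  also have "\<dots> = 16 * e / \<bar>u\<bar>"
    by (simp add: field_simps)
  finally show ?thesis .
qed

section \<open>Improper integrals over the real line\<close>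

definition integral_tails_le :: "(real \<Rightarrow> 'a::real_normed_vector) \<Rightarrow> real \<Rightarrow> real \<Rightarrow> bool" where
  "integral_tails_le F B e \<longleftrightarrow>
     (\<forall>p q. B \<le> p \<and> p \<le> q \<or> p \<le> q \<and> q \<le> - B \<longrightarrow> norm (integral {p..q} F) \<le> e)"

lemma ball_subset_interval: "a \<le> - B \<Longrightarrow> B \<le> b \<Longrightarrow> ball 0 B \<subseteq> cbox a (b::real)"
  by (auto simp: dist_real_def)

lemma integrable_on_UNIV_imp_integral_tails_le:
  fixes F :: "real \<Rightarrow> 'a::banach"
  assumes F: "F integrable_on UNIV" and "e > 0"
  obtains B where "B > 0" "integral_tails_le F B e"
proof -
  have F_ivl: "F integrable_on {a..b}" for a b
    using integrable_on_subinterval[OF F] by simp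
  obtain B where "B > 0" and B: "\<And>a b c d. ball 0 B \<subseteq> cbox a b \<Longrightarrow> ball 0 B \<subseteq> cbox c d \<Longrightarrow>
      norm (integral (cbox a b) F - integral (cbox c d) F) < e"
    using integrable_altD(2)[OF F \<open>e > 0\<close>] by auto
  have "norm (integral {p..q} F) \<le> e" if "B \<le> p \<and> p \<le> q \<or> p \<le> q \<and> q \<le> - B" for p q
    using that
  proof
    assume pq: "B \<le> p \<and> p \<le> q"
    have "integral {-B..p} F + integral {p..q} F = integral {-B..q} F"
      using pq \<open>B > 0\<close> by (intro Henstock_Kurzweil_Integration.integral_combine F_ivl) auto
    then have "integral {p..q} F = integral {-B..q} F - integral {-B..p} F"
      by (metis add_diff_cancel_left')
    moreover have "norm (integral {-B..q} F - integral {-B..p} F) < e"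
      using pq by (intro B[unfolded cbox_interval] ball_subset_interval) auto
    ultimately show ?thesis
      by simp
  next
    assume pq: "p \<le> q \<and> q \<le> - B"
    have "integral {p..q} F + integral {q..B} F = integral {p..B} F"
      using pq \<open>B > 0\<close> by (intro Henstock_Kurzweil_Integration.integral_combine F_ivl) auto
    then have "integral {p..q} F = integral {p..B} F - integral {q..B} F"
      by (metis add_diff_cancel_right')
    moreover have "norm (integral {p..B} F - integral {q..B} F) < e"
      using pq by (intro B[unfolded cbox_interval] ball_subset_interval) auto
    ultimately show ?thesis
      by simp
  qed
  then show thesis
    using that \<open>B > 0\<close> unfolding integral_tails_le_def by blast
qed

lemma integral_split_at_tails:
  fixes F :: "real \<Rightarrow> 'a::banach"
  assumes "\<And>a b. F integrable_on {a..b}" "a \<le> - B" "B \<le> b" "0 \<le> B"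
  shows "integral {a..b} F = integral {a..-B} F + integral {-B..B} F + integral {B..b} F"
proof -
  have "integral {a..-B} F + integral {-B..b} F = integral {a..b} F"
    using assms by (intro Henstock_Kurzweil_Integration.integral_combine) auto
  moreover have "integral {-B..B} F + integral {B..b} F = integral {-B..b} F"
    using assms by (intro Henstock_Kurzweil_Integration.integral_combine) auto
  ultimately show ?thesis
    by (simp add: add.assoc)
qed

lemma integrable_on_UNIV_if_integral_tails_le:
  fixes F :: "real \<Rightarrow> 'a::banach"
  assumes F_ivl: "\<And>a b. F integrable_on {a..b}"
    and tails: "\<And>e. e > 0 \<Longrightarrow> \<exists>B. integral_tails_le F B e"
  shows "F integrable_on UNIV"
proof (rule integrable_alt[THEN iffD2], intro conjI allI impI)
  show "(\<lambda>x. if x \<in> UNIV then F x else 0) integrable_on cbox a b" for a b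
    using F_ivl by simp
  fix e :: real
  assume "e > 0"
  then obtain B where B: "integral_tails_le F B (e / 5)"
    using tails[of "e / 5"] by auto
  define R where "R = \<bar>B\<bar> + 1"
  show "\<exists>R>0. \<forall>a b c d. ball 0 R \<subseteq> cbox a b \<and> ball 0 R \<subseteq> cbox c d \<longrightarrow>
      norm (integral (cbox a b) (\<lambda>x. if x \<in> UNIV then F x else 0) -
            integral (cbox c d) (\<lambda>x. if x \<in> UNIV then F x else 0)) < e"
  proof (intro exI[of _ R] conjI allI impI)
    show "R > 0"
      unfolding R_def by simp
    fix a b c d :: real
    assume "ball 0 R \<subseteq> cbox a b \<and> ball 0 R \<subseteq> cbox c d"
    moreover have "\<bar>B\<bar> \<in> ball 0 R" "- \<bar>B\<bar> \<in> ball 0 R"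
      unfolding R_def by auto
    ultimately have "\<bar>B\<bar> \<in> cbox a b" "- \<bar>B\<bar> \<in> cbox a b" "\<bar>B\<bar> \<in> cbox c d" "- \<bar>B\<bar> \<in> cbox c d"
      by blast+
    then have ab: "a \<le> - \<bar>B\<bar>" "\<bar>B\<bar> \<le> b" "c \<le> - \<bar>B\<bar>" "\<bar>B\<bar> \<le> d"
      by auto
    have small: "norm (integral {p..q} F) \<le> e / 5"
      if "\<bar>B\<bar> \<le> p \<and> p \<le> q \<or> p \<le> q \<and> q \<le> - \<bar>B\<bar>" for p q
      using B that unfolding integral_tails_le_def by force
    have "integral {a..b} F - integral {c..d} F =
        (integral {a..-\<bar>B\<bar>} F - integral {c..-\<bar>B\<bar>} F) + (integral {\<bar>B\<bar>..b} F - integral {\<bar>B\<bar>..d} F)"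
      using integral_split_at_tails[OF F_ivl ab(1,2)] integral_split_at_tails[OF F_ivl ab(3,4)]
      by simp
    also have "norm \<dots> \<le> (e / 5 + e / 5) + (e / 5 + e / 5)"
      using ab by (intro norm_triangle_le add_mono norm_triangle_ineq4[THEN order_trans] small) auto
    finally show "norm (integral (cbox a b) (\<lambda>x. if x \<in> UNIV then F x else 0) -
        integral (cbox c d) (\<lambda>x. if x \<in> UNIV then F x else 0)) < e"
      using \<open>e > 0\<close> by simp
  qed
qed

lemma norm_integral_symmetric_interval_diff_le:
  fixes F :: "real \<Rightarrow> 'a::banach"
  assumes F: "F integrable_on UNIV" and tails: "integral_tails_le F B e"
    and "B \<le> m" "0 \<le> m"
  shows "norm (integral {-m..m} F - integral UNIV F) \<le> 2 * e"
proof (rule field_le_epsilon)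
  fix \<epsilon> :: real
  assume "\<epsilon> > 0"
  have F_ivl: "F integrable_on {a..b}" for a b
    using integrable_on_subinterval[OF F] by simp
  obtain R where R: "\<And>a b. ball 0 R \<subseteq> cbox a b \<Longrightarrow> norm (integral (cbox a b) F - integral UNIV F) < \<epsilon>"
    using has_integral_alt'[of F, THEN iffD1, OF integrable_integral[OF F]] \<open>\<epsilon> > 0\<close> by force
  define M where "M = max m \<bar>R\<bar>"
  have "ball 0 R \<subseteq> cbox (-M) M"
    unfolding M_def by (force simp: dist_real_def)
  then have "norm (integral {-M..M} F - integral UNIV F) < \<epsilon>"
    using R by simp
  moreover have "norm (integral {-M..-m} F) \<le> e" "norm (integral {m..M} F) \<le> e"
    using tails \<open>B \<le> m\<close> unfolding integral_tails_le_def M_def by auto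
  moreover have "integral {-m..m} F - integral UNIV F =
      (integral {-M..M} F - integral UNIV F) - integral {-M..-m} F - integral {m..M} F"
    using integral_split_at_tails[OF F_ivl, of "-M" m M] \<open>0 \<le> m\<close> unfolding M_def by simp
  ultimately show "norm (integral {-m..m} F - integral UNIV F) \<le> 2 * e + \<epsilon>"
    by (smt (verit) norm_triangle_ineq4)
qed

section \<open>Fourier integrals of functions in \<open>L\<^sup>1 + BV\<^sub>0\<close>\<close>

definition fourier_integral :: "real set \<Rightarrow> (real \<Rightarrow> real) \<Rightarrow> real \<Rightarrow> complex" where
  "fourier_integral S \<phi> s = integral S (\<lambda>x. fourier_kernel s x * complex_of_real (\<phi> x))"

lemma absolutely_integrable_continuous_mult:
  fixes w :: "real \<Rightarrow> complex" and \<phi> :: "real \<Rightarrow> real"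
  assumes "continuous_on {p..q} w" "\<phi> absolutely_integrable_on {p..q}"
  shows "(\<lambda>x. w x * complex_of_real (\<phi> x)) absolutely_integrable_on {p..q}"
proof -
  have "bilinear (\<lambda>(c::complex) (r::real). c * complex_of_real r)"
    unfolding bilinear_def by (auto intro!: linearI simp: algebra_simps scaleR_conv_of_real)
  moreover have "w \<in> borel_measurable (lebesgue_on {p..q})"
    using assms(1) by (rule continuous_imp_measurable_on_sets_lebesgue) auto
  moreover have "bounded (w ` {p..q})"
    using assms(1) by (intro compact_imp_bounded compact_continuous_image) auto
  ultimately show ?thesis
    using absolutely_integrable_bounded_measurable_product[of _ w "{p..q}" \<phi>] assms(2) by auto
qed

lemma fourier_integrand_integrable_on_interval:
  assumes "\<phi> absolutely_integrable_on {p..q}"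
  shows "(\<lambda>x. fourier_kernel s x * complex_of_real (\<phi> x)) integrable_on {p..q}"
  using absolutely_integrable_continuous_mult[OF _ assms, of "fourier_kernel s"]
  by (simp add: continuous_intros absolutely_integrable_on_def)

lemma L1_fourier_tails:
  fixes f :: "real \<Rightarrow> real"
  assumes f: "f absolutely_integrable_on UNIV" and "e > 0"
  obtains B where "\<And>s. integral_tails_le (\<lambda>x. fourier_kernel s x * complex_of_real (f x)) B e"
proof -
  have abs_f: "(\<lambda>x. \<bar>f x\<bar>) integrable_on UNIV"
    using f by (simp add: absolutely_integrable_on_def)
  obtain B where B: "integral_tails_le (\<lambda>x. \<bar>f x\<bar>) B e"
    using integrable_on_UNIV_imp_integral_tails_le[OF abs_f \<open>e > 0\<close>] by blast
  have "norm (integral {p..q} (\<lambda>x. fourier_kernel s x * complex_of_real (f x))) \<le> e"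
    if "B \<le> p \<and> p \<le> q \<or> p \<le> q \<and> q \<le> - B" for s p q
  proof -
    have f_ivl: "f absolutely_integrable_on {p..q}"
      using f by (rule set_integrable_subset) auto
    have "norm (integral {p..q} (\<lambda>x. fourier_kernel s x * complex_of_real (f x)))
        \<le> integral {p..q} (\<lambda>x. \<bar>f x\<bar>)"
      using f_ivl by (intro integral_norm_bound_integral fourier_integrand_integrable_on_interval)
        (auto simp: absolutely_integrable_on_def norm_mult)
    also have "\<dots> \<le> e"
      using B that unfolding integral_tails_le_def by force
    finally show ?thesis .
  qed
  then show thesis
    using that unfolding integral_tails_le_def by blast
qed

lemma BV0_fourier_tails:
  fixes f :: "real \<Rightarrow> real"
  assumes f: "f \<in> BV0" and "\<delta> > 0" "e > 0"
  obtains B where "\<And>s. \<delta> \<le> \<bar>s\<bar> \<Longrightarrow> integral_tails_le (\<lambda>x. fourier_kernel s x * complex_of_real (f x)) B e"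
proof -
  obtain A C L L' where "mono A" "mono C" and f_eq: "\<And>x. f x = A x - C x"
    and L: "(A \<longlongrightarrow> L) at_top" "(C \<longlongrightarrow> L) at_top"
    and L': "(A \<longlongrightarrow> L') at_bot" "(C \<longlongrightarrow> L') at_bot"
    using BV0_imp_diff_mono_common_limits[OF f] by metis
  define \<epsilon> where "\<epsilon> = e * \<delta> / 16"
  have "\<epsilon> > 0"
    using \<open>\<delta> > 0\<close> \<open>e > 0\<close> by (simp add: \<epsilon>_def)
  have "\<forall>\<^sub>F x in at_top. \<bar>A x - L\<bar> \<le> \<epsilon> \<and> \<bar>C x - L\<bar> \<le> \<epsilon>"
    using L[THEN tendstoD, OF \<open>\<epsilon> > 0\<close>] by eventually_elim (auto simp: dist_real_def)
  then obtain N where N: "\<And>x. N \<le> x \<Longrightarrow> \<bar>A x - L\<bar> \<le> \<epsilon> \<and> \<bar>C x - L\<bar> \<le> \<epsilon>"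
    unfolding eventually_at_top_linorder by blast
  have "\<forall>\<^sub>F x in at_bot. \<bar>A x - L'\<bar> \<le> \<epsilon> \<and> \<bar>C x - L'\<bar> \<le> \<epsilon>"
    using L'[THEN tendstoD, OF \<open>\<epsilon> > 0\<close>] by eventually_elim (auto simp: dist_real_def)
  then obtain N' where N': "\<And>x. x \<le> N' \<Longrightarrow> \<bar>A x - L'\<bar> \<le> \<epsilon> \<and> \<bar>C x - L'\<bar> \<le> \<epsilon>"
    unfolding eventually_at_bot_linorder by blast
  have "norm (integral {p..q} (\<lambda>x. fourier_kernel s x * complex_of_real (f x))) \<le> e"
    if s: "\<delta> \<le> \<bar>s\<bar>" and pq: "max N (- N') \<le> p \<and> p \<le> q \<or> p \<le> q \<and> q \<le> - max N (- N')" for s p q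
  proof -
    have "s \<noteq> 0"
      using s \<open>\<delta> > 0\<close> by auto
    have "norm (integral {p..q} (\<lambda>x. fourier_kernel s x * complex_of_real (A x - C x))) \<le> 16 * \<epsilon> / \<bar>s\<bar>"
      using pq
    proof
      assume "max N (- N') \<le> p \<and> p \<le> q"
      then show ?thesis
        using N by (intro norm_integral_fourier_kernel_diff_mono_le[where L = L] \<open>mono A\<close> \<open>mono C\<close> \<open>s \<noteq> 0\<close>) auto
    next
      assume "p \<le> q \<and> q \<le> - max N (- N')"
      then show ?thesis
        using N' by (intro norm_integral_fourier_kernel_diff_mono_le[where L = L'] \<open>mono A\<close> \<open>mono C\<close> \<open>s \<noteq> 0\<close>) auto
    qed
    also have "\<dots> \<le> 16 * \<epsilon> / \<delta>"
      using s \<open>\<delta> > 0\<close> \<open>\<epsilon> > 0\<close> by (intro divide_left_mono) auto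
    also have "\<dots> = e"
      using \<open>\<delta> > 0\<close> by (simp add: \<epsilon>_def)
    finally show ?thesis
      by (simp add: f_eq)
  qed
  then show thesis
    using that[of "max N (- N')"] unfolding integral_tails_le_def by blast
qed

lemma L1_plus_BV0_fourier_tails:
  assumes "\<phi> \<in> L1_plus_BV0" "\<delta> > 0" "e > 0"
  obtains B where "\<And>s. \<delta> \<le> \<bar>s\<bar> \<Longrightarrow> integral_tails_le (\<lambda>x. fourier_kernel s x * complex_of_real (\<phi> x)) B e"
proof -
  obtain f1 f2 where f1: "f1 absolutely_integrable_on UNIV" and f2: "f2 \<in> BV0"
    and \<phi>: "\<phi> = (\<lambda>x. f1 x + f2 x)"
    using assms(1) unfolding L1_plus_BV0_def by blast
  obtain B1 where B1: "\<And>s. integral_tails_le (\<lambda>x. fourier_kernel s x * complex_of_real (f1 x)) B1 (e / 2)"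
    using L1_fourier_tails[OF f1, of "e / 2"] \<open>e > 0\<close> by auto
  obtain B2 where B2: "\<And>s. \<delta> \<le> \<bar>s\<bar> \<Longrightarrow>
      integral_tails_le (\<lambda>x. fourier_kernel s x * complex_of_real (f2 x)) B2 (e / 2)"
    using BV0_fourier_tails[OF f2 \<open>\<delta> > 0\<close>, of "e / 2"] \<open>e > 0\<close> by auto
  have f2_ivl: "f2 absolutely_integrable_on {p..q}" for p q
  proof -
    have "f2 \<in> L1_plus_BV0"
      using f2 unfolding L1_plus_BV0_def by (intro CollectI exI[of _ "\<lambda>_. 0"] exI[of _ f2]) auto
    then show ?thesis
      by (rule L1_plus_BV0_absolutely_integrable_on_interval)
  qed
  have "norm (integral {p..q} (\<lambda>x. fourier_kernel s x * complex_of_real (\<phi> x))) \<le> e"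
    if s: "\<delta> \<le> \<bar>s\<bar>" and pq: "max B1 B2 \<le> p \<and> p \<le> q \<or> p \<le> q \<and> q \<le> - max B1 B2" for s p q
  proof -
    have "integral {p..q} (\<lambda>x. fourier_kernel s x * complex_of_real (\<phi> x)) =
        integral {p..q} (\<lambda>x. fourier_kernel s x * complex_of_real (f1 x)) +
        integral {p..q} (\<lambda>x. fourier_kernel s x * complex_of_real (f2 x))"
      unfolding \<phi> of_real_add distrib_left
      using set_integrable_subset[OF f1, of "{p..q}"] f2_ivl
      by (intro integral_add fourier_integrand_integrable_on_interval) auto
    also have "norm \<dots> \<le> e / 2 + e / 2"
      using B1[of s] B2[OF s] pq unfolding integral_tails_le_def
      by (intro norm_triangle_le add_mono) auto
    finally show ?thesis
      by simp
  qed
  then show thesis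
    using that[of "max B1 B2"] unfolding integral_tails_le_def by blast
qed

lemma fourier_integrand_integrable_on_UNIV:
  assumes "\<phi> \<in> L1_plus_BV0" "s \<noteq> 0"
  shows "(\<lambda>x. fourier_kernel s x * complex_of_real (\<phi> x)) integrable_on UNIV"
proof (rule integrable_on_UNIV_if_integral_tails_le)
  show "(\<lambda>x. fourier_kernel s x * complex_of_real (\<phi> x)) integrable_on {a..b}" for a b
    using assms(1) by (intro fourier_integrand_integrable_on_interval L1_plus_BV0_absolutely_integrable_on_interval)
  show "\<exists>B. integral_tails_le (\<lambda>x. fourier_kernel s x * complex_of_real (\<phi> x)) B e" if "e > 0" for e
    using L1_plus_BV0_fourier_tails[OF assms(1), of "\<bar>s\<bar>" e] assms(2) that by auto
qed

lemma uniform_limit_truncated_fourier_integral: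
  assumes "\<phi> \<in> L1_plus_BV0" "\<delta> > 0"
  shows "uniform_limit {s. \<delta> \<le> \<bar>s\<bar>} (\<lambda>n. fourier_integral {- real n..real n} \<phi>) (fourier_integral UNIV \<phi>) sequentially"
proof (rule uniform_limitI)
  fix e :: real
  assume "e > 0"
  then obtain B where B: "\<And>s. \<delta> \<le> \<bar>s\<bar> \<Longrightarrow> integral_tails_le (\<lambda>x. fourier_kernel s x * complex_of_real (\<phi> x)) B (e / 3)"
    using L1_plus_BV0_fourier_tails[OF assms, of "e / 3"] by auto
  have "dist (fourier_integral {- real n..real n} \<phi> s) (fourier_integral UNIV \<phi> s) < e"
    if "B \<le> real n" "s \<in> {s. \<delta> \<le> \<bar>s\<bar>}" for n s
  proof -
    have "s \<noteq> 0"
      using that(2) \<open>\<delta> > 0\<close> by auto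
    then have "norm (fourier_integral {- real n..real n} \<phi> s - fourier_integral UNIV \<phi> s) \<le> 2 * (e / 3)"
      unfolding fourier_integral_def using that B
      by (intro norm_integral_symmetric_interval_diff_le fourier_integrand_integrable_on_UNIV assms(1)) auto
    then show ?thesis
      using \<open>e > 0\<close> by (simp add: dist_norm)
  qed
  moreover have "\<forall>\<^sub>F n in sequentially. B \<le> real n"
    by (rule eventually_sequentiallyI[of "nat \<lceil>B\<rceil>"]) linarith
  ultimately show "\<forall>\<^sub>F n in sequentially. \<forall>s\<in>{s. \<delta> \<le> \<bar>s\<bar>}.
      dist (fourier_integral {- real n..real n} \<phi> s) (fourier_integral UNIV \<phi> s) < e"
    by (auto elim: eventually_mono)
qed

section \<open>Differentiation of the Fourier integral\<close>

lemma norm_fourier_kernel_taylor_le: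
  "norm (fourier_kernel y x - fourier_kernel s x - complex_of_real (y - s) * (- \<i> * complex_of_real x) * fourier_kernel s x)
     \<le> ((y - s) * x)\<^sup>2 / 2"
proof -
  let ?z = "- ((y - s) * x)"
  have "fourier_kernel y x = fourier_kernel s x * iexp ?z"
    by (simp add: mult_exp_exp algebra_simps)
  then have "fourier_kernel y x - fourier_kernel s x - complex_of_real (y - s) * (- \<i> * complex_of_real x) * fourier_kernel s x
      = fourier_kernel s x * (iexp ?z - (\<Sum>k\<le>1. (\<i> * complex_of_real ?z) ^ k / fact k))"
    by (simp add: algebra_simps)
  moreover have "norm (iexp ?z - (\<Sum>k\<le>1. (\<i> * complex_of_real ?z) ^ k / fact k)) \<le> \<bar>?z\<bar> ^ 2 / 2"
    using iexp_approx1[of ?z 1] by (simp add: numeral_2_eq_2)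
  ultimately show ?thesis
    by (simp add: norm_mult power2_abs)
qed

lemma has_vector_derivative_if_quadratic_remainder:
  fixes G :: "real \<Rightarrow> 'a::real_normed_vector"
  assumes "\<And>y. norm (G y - G s - (y - s) *\<^sub>R D) \<le> K * (y - s)\<^sup>2"
  shows "(G has_vector_derivative D) (at s)"
  unfolding has_vector_derivative_def has_derivative_at_alt
proof (intro conjI allI impI bounded_linear_scaleR_left)
  fix e :: real
  assume "e > 0"
  define K' where "K' = \<bar>K\<bar> + 1"
  have "K' > 0"
    by (simp add: K'_def)
  show "\<exists>d>0. \<forall>y. norm (y - s) < d \<longrightarrow> norm (G y - G s - (y - s) *\<^sub>R D) \<le> e * norm (y - s)"
  proof (intro exI[of _ "e / K'"] conjI allI impI)
    show "e / K' > 0"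
      using \<open>e > 0\<close> \<open>K' > 0\<close> by simp
    fix y
    assume "norm (y - s) < e / K'"
    then have "\<bar>y - s\<bar> * K' \<le> e"
      using \<open>K' > 0\<close> by (simp add: field_simps)
    have "norm (G y - G s - (y - s) *\<^sub>R D) \<le> K' * (y - s)\<^sup>2"
      using assms[of y] unfolding K'_def by (smt (verit) mult_right_mono zero_le_power2)
    also have "\<dots> = \<bar>y - s\<bar> * (\<bar>y - s\<bar> * K')"
      by (simp add: power2_eq_square abs_mult_self_eq)
    also have "\<dots> \<le> \<bar>y - s\<bar> * e"
      using \<open>\<bar>y - s\<bar> * K' \<le> e\<close> by (intro mult_left_mono) auto
    finally show "norm (G y - G s - (y - s) *\<^sub>R D) \<le> e * norm (y - s)"
      by (simp add: mult.commute)
  qed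
qed

lemma has_vector_derivative_fourier_integral_interval:
  assumes \<psi>: "\<psi> absolutely_integrable_on {p..q}"
  shows "(fourier_integral {p..q} \<psi> has_vector_derivative
           (- \<i> * fourier_integral {p..q} (\<lambda>x. x * \<psi> x) s)) (at s)"
proof (rule has_vector_derivative_if_quadratic_remainder)
  fix y
  define R where "R = max \<bar>p\<bar> \<bar>q\<bar>"
  let ?H = "\<lambda>x. (fourier_kernel y x - fourier_kernel s x
      - complex_of_real (y - s) * (- \<i> * complex_of_real x) * fourier_kernel s x) * complex_of_real (\<psi> x)"
  have int: "(\<lambda>x. w x * complex_of_real (\<psi> x)) integrable_on {p..q}" if "continuous_on {p..q} w" for w
    using absolutely_integrable_continuous_mult[OF that \<psi>] by (simp add: absolutely_integrable_on_def)
  have abs_\<psi>: "(\<lambda>x. \<bar>\<psi> x\<bar>) integrable_on {p..q}"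
    using \<psi> by (simp add: absolutely_integrable_on_def)
  have int_x: "(\<lambda>x. fourier_kernel s x * complex_of_real (x * \<psi> x)) integrable_on {p..q}"
    using int[of "\<lambda>x. fourier_kernel s x * complex_of_real x"] by (simp add: continuous_intros mult.assoc)
  have int_y: "(\<lambda>x. fourier_kernel y x * complex_of_real (\<psi> x)) integrable_on {p..q}"
    and int_s: "(\<lambda>x. fourier_kernel s x * complex_of_real (\<psi> x)) integrable_on {p..q}"
    by (intro int continuous_intros)+
  have H_eq: "?H = (\<lambda>x. (fourier_kernel y x * complex_of_real (\<psi> x) - fourier_kernel s x * complex_of_real (\<psi> x))
      - (complex_of_real (y - s) * - \<i>) * (fourier_kernel s x * complex_of_real (x * \<psi> x)))"
    by (auto simp: algebra_simps)
  have "fourier_integral {p..q} \<psi> y - fourier_integral {p..q} \<psi> s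
      - (y - s) *\<^sub>R (- \<i> * fourier_integral {p..q} (\<lambda>x. x * \<psi> x) s)
      = integral {p..q} (\<lambda>x. fourier_kernel y x * complex_of_real (\<psi> x) - fourier_kernel s x * complex_of_real (\<psi> x))
        - integral {p..q} (\<lambda>x. (complex_of_real (y - s) * - \<i>) * (fourier_kernel s x * complex_of_real (x * \<psi> x)))"
    unfolding fourier_integral_def integral_diff[OF int_y int_s] integral_mult_right scaleR_conv_of_real
    by (simp add: mult.assoc)
  also have "\<dots> = integral {p..q} ?H"
    unfolding H_eq by (intro integral_diff[symmetric] integrable_diff int_y int_s integrable_on_mult_right int_x)
  also have "norm \<dots> \<le> integral {p..q} (\<lambda>x. ((y - s) * R)\<^sup>2 / 2 * \<bar>\<psi> x\<bar>)"
  proof (rule integral_norm_bound_integral)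
    show "?H integrable_on {p..q}"
      by (rule int) (intro continuous_intros)
    show "(\<lambda>x. ((y - s) * R)\<^sup>2 / 2 * \<bar>\<psi> x\<bar>) integrable_on {p..q}"
      using abs_\<psi> by (rule integrable_on_mult_right)
    fix x
    assume "x \<in> {p..q}"
    then have "((y - s) * x)\<^sup>2 \<le> ((y - s) * R)\<^sup>2"
      unfolding R_def power_mult_distrib by (intro mult_left_mono) (auto simp: abs_le_square_iff[symmetric])
    then show "norm (?H x) \<le> ((y - s) * R)\<^sup>2 / 2 * \<bar>\<psi> x\<bar>"
      unfolding norm_mult norm_of_real
      using norm_fourier_kernel_taylor_le[of y x s] by (intro mult_right_mono) auto
  qed
  also have "\<dots> = (R\<^sup>2 / 2 * integral {p..q} (\<lambda>x. \<bar>\<psi> x\<bar>)) * (y - s)\<^sup>2"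
    by (simp add: power_mult_distrib)
  finally show "norm (fourier_integral {p..q} \<psi> y - fourier_integral {p..q} \<psi> s
      - (y - s) *\<^sub>R (- \<i> * fourier_integral {p..q} (\<lambda>x. x * \<psi> x) s))
      \<le> (R\<^sup>2 / 2 * integral {p..q} (\<lambda>x. \<bar>\<psi> x\<bar>)) * (y - s)\<^sup>2" .
qed

lemma has_vector_derivative_uniform_limit:
  fixes f :: "nat \<Rightarrow> real \<Rightarrow> 'a::banach"
  assumes S: "open S" "convex S" "s \<in> S"
    and der: "\<And>n x. x \<in> S \<Longrightarrow> (f n has_vector_derivative f' n x) (at x)"
    and lim: "\<And>x. x \<in> S \<Longrightarrow> (\<lambda>n. f n x) \<longlonglongrightarrow> g x"
    and unif: "uniform_limit S f' g' sequentially"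
  shows "(g has_vector_derivative g' s) (at s)"
proof -
  have "\<exists>G. \<forall>x\<in>S. (\<lambda>n. f n x) \<longlonglongrightarrow> G x \<and> (G has_derivative (\<lambda>h. h *\<^sub>R g' x)) (at x within S)"
  proof (rule has_derivative_sequence[where f = f and f' = "\<lambda>n x h. h *\<^sub>R f' n x"])
    show "convex S" "s \<in> S" "(\<lambda>n. f n s) \<longlonglongrightarrow> g s"
      using S lim by auto
    show "(f n has_derivative (\<lambda>h. h *\<^sub>R f' n x)) (at x within S)" if "x \<in> S" for n x
      using der[OF that] unfolding has_vector_derivative_def by (rule has_derivative_at_withinI)
    show "\<forall>\<^sub>F n in sequentially. \<forall>x\<in>S. \<forall>h. norm (h *\<^sub>R f' n x - h *\<^sub>R g' x) \<le> e * norm h"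
      if "e > 0" for e
      using uniform_limitD[OF unif \<open>e > 0\<close>]
    proof eventually_elim
      case (elim n)
      show ?case
      proof (intro ballI allI)
        fix x h
        assume "x \<in> S"
        have "norm (h *\<^sub>R f' n x - h *\<^sub>R g' x) = \<bar>h\<bar> * dist (f' n x) (g' x)"
          by (simp add: dist_norm scaleR_diff_right[symmetric])
        also have "\<dots> \<le> \<bar>h\<bar> * e"
          using elim \<open>x \<in> S\<close> by (intro mult_left_mono) auto
        finally show "norm (h *\<^sub>R f' n x - h *\<^sub>R g' x) \<le> e * norm h"
          by (simp add: mult.commute)
      qed
    qed
  qed
  then obtain G where G: "\<And>x. x \<in> S \<Longrightarrow> (\<lambda>n. f n x) \<longlonglongrightarrow> G x"
    and G': "(G has_derivative (\<lambda>h. h *\<^sub>R g' s)) (at s within S)"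
    using \<open>s \<in> S\<close> by blast
  have G_eq: "G x = g x" if "x \<in> S" for x
    using G[OF that] lim[OF that] by (rule LIMSEQ_unique)
  have "(G has_derivative (\<lambda>h. h *\<^sub>R g' s)) (at s)"
    using G' by (simp add: at_within_open[OF \<open>s \<in> S\<close> \<open>open S\<close>])
  then have "(g has_derivative (\<lambda>h. h *\<^sub>R g' s)) (at s)"
    by (rule has_derivative_transform_within_open[OF _ \<open>open S\<close> \<open>s \<in> S\<close>]) (simp add: G_eq)
  then show ?thesis
    by (simp add: has_vector_derivative_def)
qed

lemma ball_half_subset_abs_ge: "ball s (\<bar>s\<bar> / 2) \<subseteq> {u::real. \<bar>s\<bar> / 2 \<le> \<bar>u\<bar>}"
proof
  fix u
  assume "u \<in> ball s (\<bar>s\<bar> / 2)"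
  then show "u \<in> {u. \<bar>s\<bar> / 2 \<le> \<bar>u\<bar>}"
    using abs_triangle_ineq2[of s u] by (simp add: dist_real_def)
qed

lemma isCont_fourier_integral:
  assumes "\<phi> \<in> L1_plus_BV0" "s \<noteq> 0"
  shows "isCont (fourier_integral UNIV \<phi>) s"
proof -
  let ?S = "ball s (\<bar>s\<bar> / 2)"
  have "uniform_limit ?S (\<lambda>n. fourier_integral {- real n..real n} \<phi>) (fourier_integral UNIV \<phi>) sequentially"
    using uniform_limit_truncated_fourier_integral[OF assms(1), of "\<bar>s\<bar> / 2"] assms(2)
    by (intro uniform_limit_on_subset[OF _ ball_half_subset_abs_ge]) auto
  moreover have "continuous_on ?S (fourier_integral {- real n..real n} \<phi>)" for n
    using has_vector_derivative_fourier_integral_interval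
      [OF L1_plus_BV0_absolutely_integrable_on_interval[OF assms(1)]]
    by (intro continuous_at_imp_continuous_on ballI has_vector_derivative_continuous) blast
  ultimately have "continuous_on ?S (fourier_integral UNIV \<phi>)"
    by (intro uniform_limit_theorem[where F = sequentially]) auto
  then show ?thesis
    using assms(2) by (simp add: continuous_on_eq_continuous_at)
qed

lemma fourier_integral_has_vector_derivative:
  assumes f: "f \<in> L1_plus_BV0" and g: "(\<lambda>t. t * f t) \<in> L1_plus_BV0" and "s \<noteq> 0"
  shows "(fourier_integral UNIV f has_vector_derivative (- \<i> * fourier_integral UNIV (\<lambda>t. t * f t) s)) (at s)"
proof (rule has_vector_derivative_uniform_limit)
  let ?S = "ball s (\<bar>s\<bar> / 2)"
  have "\<bar>s\<bar> / 2 > 0"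
    using \<open>s \<noteq> 0\<close> by simp
  note truncation = uniform_limit_on_subset[OF uniform_limit_truncated_fourier_integral[OF _ this]
      ball_half_subset_abs_ge]
  show "open ?S" "convex ?S" "s \<in> ?S"
    using \<open>s \<noteq> 0\<close> by auto
  show "(fourier_integral {- real n..real n} f has_vector_derivative
      - \<i> * fourier_integral {- real n..real n} (\<lambda>t. t * f t) x) (at x)" for n x
    using f by (intro has_vector_derivative_fourier_integral_interval L1_plus_BV0_absolutely_integrable_on_interval)
  show "(\<lambda>n. fourier_integral {- real n..real n} f x) \<longlonglongrightarrow> fourier_integral UNIV f x" if "x \<in> ?S" for x
    using truncation[OF f] that by (rule tendsto_uniform_limitI)
  show "uniform_limit ?S (\<lambda>n x. - \<i> * fourier_integral {- real n..real n} (\<lambda>t. t * f t) x)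
      (\<lambda>x. - \<i> * fourier_integral UNIV (\<lambda>t. t * f t) x) sequentially"
    using truncation[OF g] by (intro uniform_limit_intros)
qed

lemma FHK_eq_fourier_integral: "FHK \<phi> = (\<lambda>s. complex_of_real (1 / sqrt (2 * pi)) * fourier_integral UNIV \<phi> s)"
  by (simp add: fun_eq_iff FHK_def fourier_integral_def)

theorem mainTheorem5:
  fixes f :: "real \<Rightarrow> real"
  assumes "f \<in> L1_plus_BV0"
    and "(\<lambda>t. t * f t) \<in> L1_plus_BV0"
  shows "FHK f C1_differentiable_on (- {0})
     \<and> (\<forall>s. s \<noteq> 0 \<longrightarrow>
          (FHK f has_vector_derivative (- \<i> * FHK (\<lambda>t. t * f t) s)) (at s))"
proof -
  define c where "c = complex_of_real (1 / sqrt (2 * pi))"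
  have deriv: "(FHK f has_vector_derivative (- \<i> * FHK (\<lambda>t. t * f t) s)) (at s)" if "s \<noteq> 0" for s
    using has_vector_derivative_mult_right[OF fourier_integral_has_vector_derivative[OF assms that], of c]
    by (simp add: FHK_eq_fourier_integral c_def mult.left_commute)
  have "continuous_on (- {0}) (\<lambda>s. - \<i> * FHK (\<lambda>t. t * f t) s)"
    unfolding FHK_eq_fourier_integral
    by (intro continuous_at_imp_continuous_on ballI continuous_intros isCont_fourier_integral assms(2)) auto
  with deriv show ?thesis
    unfolding C1_differentiable_on_def by (intro conjI exI[of _ "\<lambda>s. - \<i> * FHK (\<lambda>t. t * f t) s"]) auto
qed

end
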